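(* Let $(G,\varphi)$ be a complex unit gain graph and let $C_l$ be a cycle of $G$ of length $l$ that is a pendant cycle, with $u$ the only vertex of $C_l$ of degree $3$ in $G$ (all other vertices of $C_l$ having degree $2$ in $G$). Let $H=G-V(C_l)$ and let $G'$ be the subgraph of $G$ induced by $V(H)\cup\{u\}$. If $l$ is odd and $\mathrm{Re}\big((-1)^{(l-1)/2}\varphi(C_l)\big)=0$, then $r(G,\varphi)=r(G',\varphi)+l-1$.
   Context: A complex unit gain graph $(G,\varphi)$ is a simple finite graph $G$ with a gain function $\varphi$ assigning to each oriented edge $e_{ij}$ a complex number of modulus $1$ with $\varphi(e_{ji})=\overline{\varphi(e_{ij})}$. Its adjacency matrix $A(G,\varphi)$ has $(i,j)$-entry $\varphi(e_{ij})$ if $v_i,v_j$ are adjacent and $0$ otherwise; $r(G,\varphi)$ is its rank, and induced subgraphs carry the restricted gain. For a cycle $C_l=u_1u_2\cdots u_lu_1$, its gain is $\varphi(C_l)=\varphi(e_{u_1u_2})\cdots\varphi(e_{u_{l-1}u_l})\varphi(e_{u_lu_1})$. *)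

theory Defs
  imports Complex_Main "Jordan_Normal_Form.DL_Rank"
begin

definition gain_graph :: "'a set \<Rightarrow> ('a \<Rightarrow> 'a \<Rightarrow> bool) \<Rightarrow> ('a \<Rightarrow> 'a \<Rightarrow> complex) \<Rightarrow> bool" where
  "gain_graph V E phi \<longleftrightarrow> finite V
     \<and> (\<forall>x y. E x y \<longrightarrow> x \<in> V \<and> y \<in> V)
     \<and> (\<forall>x. \<not> E x x)
     \<and> (\<forall>x y. E x y \<longrightarrow> E y x)
     \<and> (\<forall>x y. E x y \<longrightarrow> cmod (phi x y) = 1 \<and> phi y x = cnj (phi x y))"

definition degree :: "'a set \<Rightarrow> ('a \<Rightarrow> 'a \<Rightarrow> bool) \<Rightarrow> 'a \<Rightarrow> nat" where
  "degree V E x = card {y \<in> V. E x y}"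

text \<open>Adjacency matrix of the subgraph induced by a finite vertex set S
(vertices ordered increasingly; the rank does not depend on the order).\<close>

definition adj_mat :: "'a::linorder set \<Rightarrow> ('a \<Rightarrow> 'a \<Rightarrow> bool) \<Rightarrow> ('a \<Rightarrow> 'a \<Rightarrow> complex) \<Rightarrow> complex mat" where
  "adj_mat S E phi = (let vs = sorted_list_of_set S in
     mat (length vs) (length vs) (\<lambda>(i, j). if E (vs ! i) (vs ! j) then phi (vs ! i) (vs ! j) else 0))"

definition gain_rank :: "'a::linorder set \<Rightarrow> ('a \<Rightarrow> 'a \<Rightarrow> bool) \<Rightarrow> ('a \<Rightarrow> 'a \<Rightarrow> complex) \<Rightarrow> nat" where
  "gain_rank S E phi = vec_space.rank (card S) (adj_mat S E phi)"

definition is_cycle :: "'a set \<Rightarrow> ('a \<Rightarrow> 'a \<Rightarrow> bool) \<Rightarrow> 'a list \<Rightarrow> bool" where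
  "is_cycle V E c \<longleftrightarrow> length c \<ge> 3 \<and> distinct c \<and> set c \<subseteq> V
     \<and> (\<forall>i < length c - 1. E (c ! i) (c ! Suc i)) \<and> E (last c) (hd c)"

definition cycle_gain :: "('a \<Rightarrow> 'a \<Rightarrow> complex) \<Rightarrow> 'a list \<Rightarrow> complex" where
  "cycle_gain phi c = (\<Prod>i < length c - 1. phi (c ! i) (c ! Suc i)) * phi (last c) (hd c)"

end

theory Submission
  imports Defs "Jordan_Normal_Form.Matrix_Kernel"
begin

text \<open>Identify the kernel of the adjacency matrix with the functions f on the vertices satisfying
  \<open>\<Sum>b ~ a. phi a b * f b = 0\<close> at every vertex a. Along the cycle
  \<open>u = p 0, p 1, ..., p l = u\<close> the equations at the degree-two vertices determine every
  \<open>f (p j)\<close> as a fixed multiple of \<open>f u\<close>. With these values the contributions of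
  \<open>p 1\<close> and \<open>p (l - 1)\<close> to the equation at u add up to
  \<open>2 Re ((-1)^((l - 1) div 2) * phi(C)) * f u = 0\<close>, so restricting to \<open>V(H) \<union> {u}\<close> is an
  isomorphism between the two kernels. The nullities therefore agree, and the ranks differ by
  the number l - 1 of deleted vertices.\<close>

section \<open>Rank and nullity of matrices\<close>

lemma (in vec_space) span_cols_eq_image_mult_mat_vec:
  assumes A: "A \<in> carrier_mat n nc"
  shows "span (set (cols A)) = (\<lambda>v. A *\<^sub>v v) ` carrier_vec nc"
proof -
  have lincomb: "lincomb_list a (cols A) = A *\<^sub>v vec nc a" for a
  proof -
    have "lincomb_list a (cols A) = mat_of_cols n (cols A) *\<^sub>v vec (length (cols A)) a"
      by (rule lincomb_list_as_mat_mult) (use A cols_dim[of A] in force)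
    then show ?thesis using A mat_of_cols_cols[of A] by simp
  qed
  have "span (set (cols A)) = span_list (cols A)"
    using span_list_as_span[of "cols A"] A cols_dim by (metis carrier_matD(1))
  also have "\<dots> = range (\<lambda>a. A *\<^sub>v vec nc a)"
    unfolding span_list_def lincomb by (auto simp: class_ring_simps)
  also have "\<dots> = (\<lambda>v. A *\<^sub>v v) ` carrier_vec nc"
  proof (intro equalityI subsetI)
    fix x assume "x \<in> (\<lambda>v. A *\<^sub>v v) ` carrier_vec nc"
    then obtain v where v: "v \<in> carrier_vec nc" and x: "x = A *\<^sub>v v" by blast
    have "vec nc (\<lambda>i. v $ i) = v" using v by (intro eq_vecI) auto
    then show "x \<in> range (\<lambda>a. A *\<^sub>v vec nc a)" using x by (metis rangeI)
  qed auto
  finally show ?thesis .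
qed

lemma rank_plus_kernel_dim:
  fixes A :: "'b::field mat"
  assumes A: "A \<in> carrier_mat nr nc"
  shows "vec_space.rank nr A + kernel_dim A = nc"
proof -
  interpret V: vec_space "TYPE('b)" nc .
  interpret W: vec_space "TYPE('b)" nr .
  interpret T: linear_map class_ring "module_vec TYPE('b) nc" "module_vec TYPE('b) nr" "\<lambda>v. A *\<^sub>v v"
    by intro_locales
      (auto simp: mod_hom_axioms_def LinearCombinations.module_hom_def module_vec_simps
        mult_add_distrib_mat_vec[OF A] mult_mat_vec[OF A] A intro: mult_mat_vec_carrier[OF A])
  have "vectorspace.dim class_ring (W.vs T.imT) + vectorspace.dim class_ring (V.vs T.kerT) = V.dim"
    by (rule T.rank_nullity) simp
  moreover have "T.kerT = mat_kernel A"
    unfolding mod_hom.ker_def[OF T.mod_hom_axioms] mat_kernel_def using A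
    by (auto simp: module_vec_simps)
  moreover have "T.imT = W.span (set (cols A))"
    unfolding W.span_cols_eq_image_mult_mat_vec[OF A] mod_hom.im_def[OF T.mod_hom_axioms]
    by (simp add: module_vec_simps)
  ultimately show ?thesis
    unfolding V.dim_is_n W.rank_def kernel_dim_def using A by simp
qed

lemma kernel_dim_eq_by_linear_bij:
  fixes A :: "'b::field mat" and B :: "'b mat"
  assumes A: "A \<in> carrier_mat nr nc" and B: "B \<in> carrier_mat mr mc"
    and add: "\<And>x y. x \<in> mat_kernel A \<Longrightarrow> y \<in> mat_kernel A \<Longrightarrow> T (x + y) = T x + T y"
    and smult: "\<And>a x. x \<in> mat_kernel A \<Longrightarrow> T (a \<cdot>\<^sub>v x) = a \<cdot>\<^sub>v T x"
    and bij: "bij_betw T (mat_kernel A) (mat_kernel B)"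
  shows "kernel_dim A = kernel_dim B"
proof -
  interpret KA: kernel nr nc A by (unfold_locales, rule A)
  interpret KB: kernel mr mc B by (unfold_locales, rule B)
  interpret T: linear_map class_ring KA.VK KB.VK T
    by intro_locales
      (use add smult bij in \<open>auto simp: mod_hom_axioms_def LinearCombinations.module_hom_def
        module_vec_simps bij_betw_def\<close>)
  obtain C where "finite C" "KA.basis C" using kernel_basis_exists[OF A] by blast
  then have "KA.Ker.fin_dim" unfolding KA.Ker.fin_dim_def KA.Ker.basis_def by auto
  then have "KA.dim = KB.dim"
    by (rule T.dim_eq) (use bij in \<open>auto simp: bij_betw_def\<close>)
  then show ?thesis unfolding kernel_dim_def using A B by simp
qed

section \<open>Kernels of gain adjacency matrices as vertex functions\<close>

text \<open>Values of kernel functions outside S are irrelevant, so kernels are compared only up to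
  agreement on S.\<close>

definition nbr_sum :: "'a set \<Rightarrow> ('a \<Rightarrow> 'a \<Rightarrow> bool) \<Rightarrow> ('a \<Rightarrow> 'a \<Rightarrow> complex) \<Rightarrow> ('a \<Rightarrow> complex) \<Rightarrow> 'a \<Rightarrow> complex"
  where "nbr_sum S E phi f a = (\<Sum>b\<in>{b\<in>S. E a b}. phi a b * f b)"

definition gain_kernel :: "'a set \<Rightarrow> ('a \<Rightarrow> 'a \<Rightarrow> bool) \<Rightarrow> ('a \<Rightarrow> 'a \<Rightarrow> complex) \<Rightarrow> ('a \<Rightarrow> complex) set"
  where "gain_kernel S E phi = {f. \<forall>a\<in>S. nbr_sum S E phi f a = 0}"

definition fun_of_vec :: "'a::linorder set \<Rightarrow> complex vec \<Rightarrow> 'a \<Rightarrow> complex"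
  where "fun_of_vec S x b = x $ find_first b (sorted_list_of_set S)"

definition vec_of_fun :: "'a::linorder set \<Rightarrow> ('a \<Rightarrow> complex) \<Rightarrow> complex vec"
  where "vec_of_fun S f = vec (card S) (\<lambda>i. f (sorted_list_of_set S ! i))"

lemma nbr_sum_cong: "(\<And>b. b \<in> S \<Longrightarrow> f b = g b) \<Longrightarrow> nbr_sum S E phi f a = nbr_sum S E phi g a"
  unfolding nbr_sum_def by (rule sum.cong) auto

lemma gain_kernel_cong:
  "(\<And>b. b \<in> S \<Longrightarrow> f b = g b) \<Longrightarrow> f \<in> gain_kernel S E phi \<longleftrightarrow> g \<in> gain_kernel S E phi"
  unfolding gain_kernel_def using nbr_sum_cong[of S f g] by auto

lemma adj_mat_carrier: "finite S \<Longrightarrow> adj_mat S E phi \<in> carrier_mat (card S) (card S)"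
  unfolding adj_mat_def Let_def by simp

lemma vec_of_fun_carrier [simp]: "vec_of_fun S f \<in> carrier_vec (card S)"
  unfolding vec_of_fun_def by simp

lemma fun_of_vec_of_fun: "finite S \<Longrightarrow> b \<in> S \<Longrightarrow> fun_of_vec S (vec_of_fun S f) b = f b"
  unfolding fun_of_vec_def vec_of_fun_def
  using find_first_le[of b "sorted_list_of_set S"] nth_find_first[of b "sorted_list_of_set S"]
  by simp

lemma vec_of_fun_of_vec: "finite S \<Longrightarrow> x \<in> carrier_vec (card S) \<Longrightarrow> vec_of_fun S (fun_of_vec S x) = x"
  unfolding fun_of_vec_def vec_of_fun_def by (intro eq_vecI) (auto simp: find_first_unique)

lemma vec_of_fun_cong: "finite S \<Longrightarrow> (\<And>b. b \<in> S \<Longrightarrow> f b = g b) \<Longrightarrow> vec_of_fun S f = vec_of_fun S g"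
  unfolding vec_of_fun_def using nth_mem[of _ "sorted_list_of_set S"] by (intro eq_vecI) auto

lemma vec_of_fun_add: "vec_of_fun S (\<lambda>b. f b + g b) = vec_of_fun S f + vec_of_fun S g"
  unfolding vec_of_fun_def by (intro eq_vecI) auto

lemma vec_of_fun_smult: "vec_of_fun S (\<lambda>b. a * f b) = a \<cdot>\<^sub>v vec_of_fun S f"
  unfolding vec_of_fun_def by (intro eq_vecI) auto

lemma fun_of_vec_add:
  "finite S \<Longrightarrow> b \<in> S \<Longrightarrow> x \<in> carrier_vec (card S) \<Longrightarrow> y \<in> carrier_vec (card S) \<Longrightarrow>
   fun_of_vec S (x + y) b = fun_of_vec S x b + fun_of_vec S y b"
  unfolding fun_of_vec_def using find_first_le[of b "sorted_list_of_set S"] by simp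

lemma fun_of_vec_smult:
  "finite S \<Longrightarrow> b \<in> S \<Longrightarrow> x \<in> carrier_vec (card S) \<Longrightarrow> fun_of_vec S (a \<cdot>\<^sub>v x) b = a * fun_of_vec S x b"
  unfolding fun_of_vec_def using find_first_le[of b "sorted_list_of_set S"] by simp

lemma adj_mat_mult_vec_nth:
  assumes S: "finite S" and x: "x \<in> carrier_vec (card S)" and i: "i < card S"
  shows "(adj_mat S E phi *\<^sub>v x) $ i = nbr_sum S E phi (fun_of_vec S x) (sorted_list_of_set S ! i)"
proof -
  let ?vs = "sorted_list_of_set S"
  let ?a = "?vs ! i"
  have bij: "bij_betw (nth ?vs) {..<card S} S"
    using S bij_betw_nth[of ?vs "{..<card S}" S] by (simp add: lessThan_atLeast0)
  have "(adj_mat S E phi *\<^sub>v x) $ i = (\<Sum>j<card S. (if E ?a (?vs ! j) then phi ?a (?vs ! j) else 0) * x $ j)"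
    using i x unfolding adj_mat_def Let_def mult_mat_vec_def scalar_prod_def
    by (auto simp: lessThan_atLeast0 intro!: sum.cong)
  also have "\<dots> = (\<Sum>j<card S. (if E ?a (?vs ! j) then phi ?a (?vs ! j) else 0) * fun_of_vec S x (?vs ! j))"
    unfolding fun_of_vec_def using S by (intro sum.cong) (auto simp: find_first_unique)
  also have "\<dots> = (\<Sum>b\<in>S. (if E ?a b then phi ?a b else 0) * fun_of_vec S x b)"
    by (rule sum.reindex_bij_betw[OF bij])
  also have "\<dots> = nbr_sum S E phi (fun_of_vec S x) ?a"
    unfolding nbr_sum_def using S by (auto simp: sum.inter_filter intro!: sum.cong)
  finally show ?thesis .
qed

lemma mat_kernel_adj_mat_iff:
  assumes S: "finite S"
  shows "x \<in> mat_kernel (adj_mat S E phi)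
    \<longleftrightarrow> x \<in> carrier_vec (card S) \<and> fun_of_vec S x \<in> gain_kernel S E phi"
proof (cases "x \<in> carrier_vec (card S)")
  case x: True
  have A: "adj_mat S E phi \<in> carrier_mat (card S) (card S)" by (rule adj_mat_carrier[OF S])
  have "x \<in> mat_kernel (adj_mat S E phi) \<longleftrightarrow> (\<forall>i<card S. (adj_mat S E phi *\<^sub>v x) $ i = 0)"
    using mat_kernel[OF A] x A by (auto simp: vec_eq_iff)
  also have "\<dots> \<longleftrightarrow> (\<forall>i<card S. nbr_sum S E phi (fun_of_vec S x) (sorted_list_of_set S ! i) = 0)"
    using adj_mat_mult_vec_nth[OF S x] by simp
  also have "\<dots> \<longleftrightarrow> (\<forall>a\<in>S. nbr_sum S E phi (fun_of_vec S x) a = 0)"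
    using S by (metis in_set_conv_nth set_sorted_list_of_set sorted_list_of_set.length_sorted_key_list_of_set)
  finally show ?thesis unfolding gain_kernel_def using x by simp
next
  case False
  then show ?thesis using mat_kernel_carrier[OF adj_mat_carrier[OF S]] by blast
qed

definition restrict_vec :: "'a::linorder set \<Rightarrow> 'a set \<Rightarrow> complex vec \<Rightarrow> complex vec"
  where "restrict_vec S S' x = vec_of_fun S' (fun_of_vec S x)"

lemma fun_of_restrict_vec:
  "finite S' \<Longrightarrow> b \<in> S' \<Longrightarrow> fun_of_vec S' (restrict_vec S S' x) b = fun_of_vec S x b"
  unfolding restrict_vec_def by (rule fun_of_vec_of_fun)

lemma restrict_vec_add:
  assumes "finite S" "S' \<subseteq> S" "x \<in> carrier_vec (card S)" "y \<in> carrier_vec (card S)"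
  shows "restrict_vec S S' (x + y) = restrict_vec S S' x + restrict_vec S S' y"
proof -
  have "finite S'" using assms(1,2) finite_subset by blast
  then have "restrict_vec S S' (x + y) = vec_of_fun S' (\<lambda>b. fun_of_vec S x b + fun_of_vec S y b)"
    unfolding restrict_vec_def using assms by (intro vec_of_fun_cong fun_of_vec_add) auto
  then show ?thesis unfolding restrict_vec_def by (simp add: vec_of_fun_add)
qed

lemma restrict_vec_smult:
  assumes "finite S" "S' \<subseteq> S" "x \<in> carrier_vec (card S)"
  shows "restrict_vec S S' (a \<cdot>\<^sub>v x) = a \<cdot>\<^sub>v restrict_vec S S' x"
proof -
  have "finite S'" using assms(1,2) finite_subset by blast
  then have "restrict_vec S S' (a \<cdot>\<^sub>v x) = vec_of_fun S' (\<lambda>b. a * fun_of_vec S x b)"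
    unfolding restrict_vec_def using assms by (intro vec_of_fun_cong fun_of_vec_smult) auto
  then show ?thesis unfolding restrict_vec_def by (simp add: vec_of_fun_smult)
qed

lemma bij_betw_restrict_vec_mat_kernel:
  fixes S S' :: "'a::linorder set"
  assumes S: "finite S" and sub: "S' \<subseteq> S"
    and restrict: "\<And>f. f \<in> gain_kernel S E phi \<Longrightarrow> f \<in> gain_kernel S' E phi"
    and determined: "\<And>f g b. f \<in> gain_kernel S E phi \<Longrightarrow> g \<in> gain_kernel S E phi \<Longrightarrow>
      (\<forall>b\<in>S'. f b = g b) \<Longrightarrow> b \<in> S \<Longrightarrow> f b = g b"
    and extend: "\<And>g. g \<in> gain_kernel S' E phi \<Longrightarrow> \<exists>f \<in> gain_kernel S E phi. \<forall>b\<in>S'. f b = g b"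
  shows "bij_betw (restrict_vec S S') (mat_kernel (adj_mat S E phi)) (mat_kernel (adj_mat S' E phi))"
proof -
  have S': "finite S'" using S sub finite_subset by blast
  let ?T = "restrict_vec S S'"
  note kerA = mat_kernel_adj_mat_iff[OF S] and kerB = mat_kernel_adj_mat_iff[OF S']
  have "?T x \<in> mat_kernel (adj_mat S' E phi)" if x: "x \<in> mat_kernel (adj_mat S E phi)" for x
  proof -
    have "fun_of_vec S x \<in> gain_kernel S' E phi" using restrict x kerA by blast
    then show ?thesis
      using kerB gain_kernel_cong[of S' "fun_of_vec S' (?T x)"] fun_of_restrict_vec[OF S']
      unfolding restrict_vec_def by simp
  qed
  moreover have "y \<in> ?T ` mat_kernel (adj_mat S E phi)" if y: "y \<in> mat_kernel (adj_mat S' E phi)" for y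
  proof -
    obtain f where f: "f \<in> gain_kernel S E phi" and fy: "\<forall>b\<in>S'. f b = fun_of_vec S' y b"
      using extend y kerB by blast
    have "fun_of_vec S (vec_of_fun S f) \<in> gain_kernel S E phi"
      using gain_kernel_cong[of S _ f] fun_of_vec_of_fun[OF S] f by blast
    then have "vec_of_fun S f \<in> mat_kernel (adj_mat S E phi)" using kerA by simp
    moreover have "?T (vec_of_fun S f) = y"
      unfolding restrict_vec_def using fun_of_vec_of_fun[OF S] fy sub vec_of_fun_of_vec[OF S'] y kerB
      by (metis subsetD vec_of_fun_cong[OF S'])
    ultimately show ?thesis by blast
  qed
  moreover have "inj_on ?T (mat_kernel (adj_mat S E phi))"
  proof (rule inj_onI)
    fix x1 x2 assume x1: "x1 \<in> mat_kernel (adj_mat S E phi)" and x2: "x2 \<in> mat_kernel (adj_mat S E phi)"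
      and "?T x1 = ?T x2"
    then have "\<forall>b\<in>S'. fun_of_vec S x1 b = fun_of_vec S x2 b" using fun_of_restrict_vec[OF S'] by metis
    then have "b \<in> S \<Longrightarrow> fun_of_vec S x1 b = fun_of_vec S x2 b" for b
      using determined x1 x2 kerA by blast
    then have "vec_of_fun S (fun_of_vec S x1) = vec_of_fun S (fun_of_vec S x2)"
      by (intro vec_of_fun_cong[OF S])
    then show "x1 = x2" using vec_of_fun_of_vec[OF S] x1 x2 kerA by metis
  qed
  ultimately show ?thesis unfolding bij_betw_def by blast
qed

lemma gain_rank_eq_by_kernel_restriction:
  fixes S S' :: "'a::linorder set"
  assumes S: "finite S" and sub: "S' \<subseteq> S"
    and restrict: "\<And>f. f \<in> gain_kernel S E phi \<Longrightarrow> f \<in> gain_kernel S' E phi"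
    and determined: "\<And>f g b. f \<in> gain_kernel S E phi \<Longrightarrow> g \<in> gain_kernel S E phi \<Longrightarrow>
      (\<forall>b\<in>S'. f b = g b) \<Longrightarrow> b \<in> S \<Longrightarrow> f b = g b"
    and extend: "\<And>g. g \<in> gain_kernel S' E phi \<Longrightarrow> \<exists>f \<in> gain_kernel S E phi. \<forall>b\<in>S'. f b = g b"
  shows "gain_rank S E phi + card S' = gain_rank S' E phi + card S"
proof -
  have S': "finite S'" using S sub finite_subset by blast
  have A: "adj_mat S E phi \<in> carrier_mat (card S) (card S)" by (rule adj_mat_carrier[OF S])
  have B: "adj_mat S' E phi \<in> carrier_mat (card S') (card S')" by (rule adj_mat_carrier[OF S'])
  have "bij_betw (restrict_vec S S') (mat_kernel (adj_mat S E phi)) (mat_kernel (adj_mat S' E phi))"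
    by (rule bij_betw_restrict_vec_mat_kernel[OF S sub]) (use restrict determined extend in blast)+
  then have "kernel_dim (adj_mat S E phi) = kernel_dim (adj_mat S' E phi)"
    using restrict_vec_add[OF S sub] restrict_vec_smult[OF S sub] mat_kernel_carrier[OF A]
    by (intro kernel_dim_eq_by_linear_bij[where T = "restrict_vec S S'", OF A B]) blast+
  then show ?thesis
    using rank_plus_kernel_dim[OF A] rank_plus_kernel_dim[OF B] unfolding gain_rank_def by linarith
qed

section \<open>Cycles as cyclic lists\<close>

lemma nth_Suc_mod_length:
  assumes "i < length c"
  shows "c ! (Suc i mod length c) = (if Suc i = length c then hd c else c ! Suc i)"
proof -
  have "c \<noteq> []" using assms by auto
  then show ?thesis using assms by (cases "Suc i = length c") (auto simp: hd_conv_nth)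
qed

lemma is_cycle_iff_cyclic_edges:
  "is_cycle V E c \<longleftrightarrow> 3 \<le> length c \<and> distinct c \<and> set c \<subseteq> V
     \<and> (\<forall>i < length c. E (c ! i) (c ! (Suc i mod length c)))"
proof -
  have "(\<forall>i < length c. E (c ! i) (c ! (Suc i mod length c)))
      \<longleftrightarrow> (\<forall>i < length c - 1. E (c ! i) (c ! Suc i)) \<and> E (last c) (hd c)"
    if c: "c \<noteq> []"
  proof
    assume cyc: "\<forall>i < length c. E (c ! i) (c ! (Suc i mod length c))"
    have "E (c ! i) (c ! Suc i)" if "i < length c - 1" for i
      using cyc[rule_format, of i] that nth_Suc_mod_length[of i c] by simp
    moreover have "E (last c) (hd c)"
      using cyc[rule_format, of "length c - 1"] nth_Suc_mod_length[of "length c - 1" c] c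
      by (simp add: last_conv_nth)
    ultimately show "(\<forall>i < length c - 1. E (c ! i) (c ! Suc i)) \<and> E (last c) (hd c)" by blast
  next
    assume path: "(\<forall>i < length c - 1. E (c ! i) (c ! Suc i)) \<and> E (last c) (hd c)"
    show "\<forall>i < length c. E (c ! i) (c ! (Suc i mod length c))"
    proof (intro allI impI)
      fix i assume i: "i < length c"
      show "E (c ! i) (c ! (Suc i mod length c))"
      proof (cases "Suc i = length c")
        case True
        then have "c ! i = last c" using c by (simp add: last_conv_nth flip: True)
        then show ?thesis using path nth_Suc_mod_length[OF i] True by simp
      next
        case False
        then show ?thesis using path nth_Suc_mod_length[OF i] i by simp
      qed
    qed
  qed
  then show ?thesis unfolding is_cycle_def by (cases "c = []") auto
qed

lemma cycle_gain_eq_cyclic_prod: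
  assumes "c \<noteq> []"
  shows "cycle_gain phi c = (\<Prod>i < length c. phi (c ! i) (c ! (Suc i mod length c)))"
proof -
  have "{..<length c} = insert (length c - 1) {..<length c - 1}" using assms by auto
  moreover have "last c = c ! (length c - 1)" "hd c = c ! 0"
    using assms by (simp_all add: last_conv_nth hd_conv_nth)
  moreover have "Suc (length c - 1) mod length c = 0" using assms by simp
  ultimately show ?thesis unfolding cycle_gain_def by (simp add: mult.commute)
qed

lemma prod_lessThan_Suc_mod:
  fixes g :: "nat \<Rightarrow> 'b::comm_monoid_mult"
  shows "(\<Prod>i<n. g (Suc i mod n)) = (\<Prod>i<n. g i)"
proof (cases n)
  case (Suc n')
  have "(\<Prod>i<Suc n'. g (Suc i mod Suc n')) = (\<Prod>i<n'. g (Suc i)) * g 0"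
    by (simp add: prod.lessThan_Suc)
  also have "\<dots> = (\<Prod>i<Suc n'. g i)" by (subst prod.lessThan_Suc_shift) (simp add: mult.commute)
  finally show ?thesis using Suc by simp
qed simp

lemma prod_lessThan_rotate:
  fixes f :: "nat \<Rightarrow> 'b::comm_monoid_mult"
  shows "(\<Prod>i<n. f ((k + i) mod n)) = (\<Prod>i<n. f i)"
proof (induction k)
  case (Suc k)
  have "(\<Prod>i<n. f ((Suc k + i) mod n)) = (\<Prod>i<n. f ((k + Suc i mod n) mod n))"
    by (simp add: mod_add_right_eq)
  also have "\<dots> = (\<Prod>i<n. f ((k + i) mod n))" by (rule prod_lessThan_Suc_mod)
  finally show ?case using Suc.IH by simp
qed simp

lemma rotate_nth_Suc_mod_length:
  assumes "i < length c"
  shows "rotate k c ! (Suc i mod length c) = c ! (Suc (k + i) mod length c)"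
proof -
  have "rotate k c ! (Suc i mod length c) = c ! ((k + Suc i mod length c) mod length c)"
    using assms by (intro nth_rotate mod_less_divisor) auto
  then show ?thesis by (simp add: mod_add_right_eq)
qed

lemma is_cycle_rotate:
  assumes "is_cycle V E c"
  shows "is_cycle V E (rotate k c)"
proof -
  have edges: "E (c ! i) (c ! (Suc i mod length c))" if "i < length c" for i
    using assms that unfolding is_cycle_iff_cyclic_edges by blast
  have "E (rotate k c ! i) (rotate k c ! (Suc i mod length c))" if i: "i < length c" for i
  proof -
    have "(k + i) mod length c < length c" by (rule mod_less_divisor) (use i in linarith)
    then show ?thesis
      using edges[of "(k + i) mod length c"] i by (simp add: nth_rotate rotate_nth_Suc_mod_length mod_Suc_eq)
  qed
  then show ?thesis using assms unfolding is_cycle_iff_cyclic_edges by simp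
qed

lemma cycle_gain_rotate:
  assumes "c \<noteq> []"
  shows "cycle_gain phi (rotate k c) = cycle_gain phi c"
proof -
  let ?F = "\<lambda>i. phi (c ! i) (c ! (Suc i mod length c))"
  have "cycle_gain phi (rotate k c) = (\<Prod>i<length c. ?F ((k + i) mod length c))"
    using assms by (simp add: cycle_gain_eq_cyclic_prod nth_rotate mod_add_right_eq mod_Suc_eq)
  also have "\<dots> = cycle_gain phi c"
    using assms prod_lessThan_rotate[of ?F] by (simp add: cycle_gain_eq_cyclic_prod)
  finally show ?thesis .
qed

section \<open>Pendant odd cycles\<close>

lemma unimodular_mult_cnj: "cmod x = 1 \<Longrightarrow> x * cnj x = 1"
  by (metis complex_norm_square mult.right_neutral of_real_1 power_one)

lemma unimodular_solve_fst:
  assumes x: "cmod x = 1" and eq: "cnj x * a + y * b = 0"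
  shows "a = - x * y * b"
proof -
  have "a = x * (cnj x * a)" using unimodular_mult_cnj[OF x] by (simp add: mult.assoc[symmetric])
  also have "cnj x * a = - y * b" using eq by (simp add: eq_neg_iff_add_eq_0)
  finally show ?thesis by simp
qed

lemma unimodular_solve_snd:
  assumes y: "cmod y = 1" and eq: "cnj x * a + y * b = 0"
  shows "b = - cnj y * cnj x * a"
proof -
  have "b = cnj y * (y * b)" using unimodular_mult_cnj[OF y] by (simp add: mult.commute mult.left_commute)
  also have "y * b = - cnj x * a" using eq by (simp add: eq_neg_iff_add_eq_0 add.commute)
  finally show ?thesis by simp
qed

locale pendant_odd_cycle =
  fixes V :: "'a::linorder set" and E :: "'a \<Rightarrow> 'a \<Rightarrow> bool"
    and phi :: "'a \<Rightarrow> 'a \<Rightarrow> complex" and c :: "'a list" and u :: 'a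
  assumes gain_graph: "gain_graph V E phi"
    and cycle: "is_cycle V E c"
    and starts_at_u: "c ! 0 = u"
    and degree_two: "\<forall>x \<in> set c. x \<noteq> u \<longrightarrow> degree V E x = 2"
    and odd_length: "odd (length c)"
    and re_gain: "Re ((-1) ^ ((length c - 1) div 2) * cycle_gain phi c) = 0"
begin

abbreviation "l \<equiv> length c"

definition "m = (l - 1) div 2"

definition "V' = (V - set c) \<union> {u}"

definition "p j = c ! (j mod l)"

definition "e j = phi (p j) (p (Suc j))"

lemma finite_V: "finite V"
  using gain_graph unfolding gain_graph_def by simp

lemma E_sym: "E x y \<Longrightarrow> E y x"
  using gain_graph unfolding gain_graph_def by blast

lemma E_irrefl: "\<not> E x x"
  using gain_graph unfolding gain_graph_def by blast

lemma l_ge_3: "3 \<le> l"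
  using cycle unfolding is_cycle_def by simp

lemma l_eq: "l = 2 * m + 1"
  unfolding m_def using odd_length by (auto elim!: oddE)

lemma m_ge_1: "1 \<le> m"
  using l_eq l_ge_3 by linarith

lemma l_pos: "0 < l"
  using l_ge_3 by linarith

lemma p_0: "p 0 = u" and p_l: "p l = u"
  unfolding p_def using starts_at_u by simp_all

lemma p_mem: "p j \<in> set c"
  unfolding p_def using l_ge_3 by (intro nth_mem mod_less_divisor) linarith

lemma p_in_V: "p j \<in> V"
  using p_mem cycle unfolding is_cycle_def by blast

lemma p_inj: "a < l \<Longrightarrow> b < l \<Longrightarrow> p a = p b \<Longrightarrow> a = b"
  unfolding p_def using cycle unfolding is_cycle_def by (simp add: nth_eq_iff_index_eq)

lemma set_c: "set c = p ` {..<l}"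
  unfolding p_def by (auto simp: in_set_conv_nth image_iff)

lemma cycle_edge: "E (p j) (p (Suc j))"
proof -
  have "j mod l < l" using l_ge_3 by (intro mod_less_divisor) linarith
  then have "E (c ! (j mod l)) (c ! (Suc (j mod l) mod l))"
    using cycle unfolding is_cycle_iff_cyclic_edges by blast
  then show ?thesis unfolding p_def by (simp add: mod_Suc_eq)
qed

lemma cycle_edge_rev: "E (p (Suc j)) (p j)"
  using cycle_edge E_sym by blast

lemma e_unimodular: "cmod (e j) = 1"
  using gain_graph cycle_edge unfolding gain_graph_def e_def by blast

lemma e_rev: "phi (p (Suc j)) (p j) = cnj (e j)"
  using gain_graph cycle_edge unfolding gain_graph_def e_def by blast

lemma cycle_gain_eq_prod_e: "cycle_gain phi c = (\<Prod>j<l. e j)"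
proof -
  have "c \<noteq> []" using l_ge_3 by auto
  then show ?thesis
    unfolding cycle_gain_eq_cyclic_prod[OF \<open>c \<noteq> []\<close>] e_def p_def by (intro prod.cong) auto
qed

lemma u_in_V: "u \<in> V"
  using p_in_V[of 0] p_0 by simp

lemma V'_subset: "V' \<subseteq> V"
  unfolding V'_def using u_in_V by auto

lemma finite_V': "finite V'"
  using finite_V V'_subset finite_subset by blast

lemma p_neq_u: "1 \<le> j \<Longrightarrow> j < l \<Longrightarrow> p j \<noteq> u"
  using p_inj[of j 0] p_0 l_pos by auto

lemma p_mod: "p (j mod l) = p j"
  unfolding p_def by simp

lemma nbrs_path:
  assumes j: "1 \<le> j" "j < l"
  shows "{b\<in>V. E (p j) b} = {p (j - 1), p (Suc j)}" and "p (j - 1) \<noteq> p (Suc j)"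
proof -
  show ne: "p (j - 1) \<noteq> p (Suc j)"
  proof
    assume "p (j - 1) = p (Suc j)"
    then have "j - 1 = Suc j mod l"
      using p_inj[of "j - 1" "Suc j mod l"] j p_mod[of "Suc j"] mod_less_divisor[OF l_pos] by simp
    then show False using j l_ge_3 by (cases "Suc j = l") auto
  qed
  have "E (p j) (p (j - 1))" using cycle_edge_rev[of "j - 1"] j by simp
  then have "{p (j - 1), p (Suc j)} \<subseteq> {b\<in>V. E (p j) b}" using cycle_edge[of j] p_in_V by auto
  moreover have "card {b\<in>V. E (p j) b} = 2"
    using degree_two p_mem[of j] p_neq_u[OF j] unfolding degree_def by blast
  ultimately show "{b\<in>V. E (p j) b} = {p (j - 1), p (Suc j)}"
    using ne finite_V by (intro card_subset_eq[symmetric]) auto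
qed

lemma nbr_sum_path:
  assumes "1 \<le> j" "j < l"
  shows "nbr_sum V E phi f (p j) = cnj (e (j - 1)) * f (p (j - 1)) + e j * f (p (Suc j))"
proof -
  have "phi (p j) (p (j - 1)) = cnj (e (j - 1))" using e_rev[of "j - 1"] assms by simp
  then show ?thesis
    unfolding nbr_sum_def nbrs_path(1)[OF assms] using nbrs_path(2)[OF assms] by (simp add: e_def)
qed

lemma cycle_nbr_of_u:
  assumes b: "b \<in> set c" "E u b"
  shows "b = p 1 \<or> b = p (2 * m)"
proof -
  obtain j where j: "j < l" "b = p j" using b set_c by auto
  have "j \<noteq> 0"
  proof
    assume "j = 0"
    then show False using j b E_irrefl[of u] p_0 by simp
  qed
  then have j1: "1 \<le> j" "j < l" using j by auto
  have "u \<in> {p (j - 1), p (Suc j)}" using nbrs_path(1)[OF j1] b j E_sym u_in_V by blast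
  then have "j - 1 = 0 \<or> Suc j = l"
  proof
    assume "u = p (j - 1)"
    then have "p 0 = p (j - 1)" using p_0 by simp
    then show ?thesis using p_inj[of 0 "j - 1"] j1 l_pos by linarith
  next
    assume "u \<in> {p (Suc j)}"
    then have "p 0 = p (Suc j)" using p_0 by simp
    then show ?thesis using p_inj[of 0 "Suc j"] j1 l_pos by (cases "Suc j < l") auto
  qed
  then show ?thesis using j j1 l_eq by (auto simp: le_Suc_eq)
qed

lemma nbrs_u:
  shows "{b\<in>V. E u b} = {b\<in>V'. E u b} \<union> {p 1, p (2 * m)}"
    and "{b\<in>V'. E u b} \<inter> {p 1, p (2 * m)} = {}"
    and "p 1 \<noteq> p (2 * m)"
proof -
  have small: "1 < l" "2 * m < l" using l_eq m_ge_1 by auto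
  show "p 1 \<noteq> p (2 * m)" using p_inj[of 1 "2 * m"] small m_ge_1 by auto
  have "p 1 \<notin> V'" "p (2 * m) \<notin> V'"
    using p_mem p_neq_u[of 1] p_neq_u[of "2 * m"] small m_ge_1 unfolding V'_def by auto
  then show "{b\<in>V'. E u b} \<inter> {p 1, p (2 * m)} = {}" by auto
  have "E u (p 1)" "E u (p (2 * m))"
    using cycle_edge[of 0] cycle_edge_rev[of "2 * m"] p_0 p_l l_eq by simp_all
  then show "{b\<in>V. E u b} = {b\<in>V'. E u b} \<union> {p 1, p (2 * m)}"
    using V'_subset p_in_V cycle_nbr_of_u unfolding V'_def by auto
qed

lemma nbr_sum_u:
  "nbr_sum V E phi f u = nbr_sum V' E phi f u + e 0 * f (p 1) + cnj (e (2 * m)) * f (p (2 * m))"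
proof -
  have "nbr_sum V E phi f u = nbr_sum V' E phi f u + (\<Sum>b\<in>{p 1, p (2 * m)}. phi u b * f b)"
    unfolding nbr_sum_def nbrs_u(1) using finite_V' nbrs_u(2) by (intro sum.union_disjoint) auto
  moreover have "phi u (p 1) = e 0" unfolding e_def using p_0 by simp
  moreover have "phi u (p (2 * m)) = cnj (e (2 * m))" using e_rev[of "2 * m"] p_l l_eq by simp
  ultimately show ?thesis using nbrs_u(3) by simp
qed

lemma nbr_sum_outside:
  assumes h: "h \<in> V - set c"
  shows "nbr_sum V E phi f h = nbr_sum V' E phi f h"
proof -
  have "b \<in> V'" if b: "b \<in> V" "E h b" for b
  proof (rule ccontr)
    assume "b \<notin> V'"
    then have "b \<in> set c" "b \<noteq> u" using b unfolding V'_def by auto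
    then obtain j where j: "j < l" "b = p j" using set_c by auto
    then have "1 \<le> j" using \<open>b \<noteq> u\<close> p_0 by (cases j) auto
    then have "h \<in> {b\<in>V. E (p j) b}" using b h j E_sym by auto
    then have "h \<in> set c" using nbrs_path(1)[OF \<open>1 \<le> j\<close> j(1)] p_mem by auto
    then show False using h by simp
  qed
  then have "{b\<in>V. E h b} = {b\<in>V'. E h b}" using V'_subset by auto
  then show ?thesis unfolding nbr_sum_def by simp
qed

text \<open>Kernel functions satisfy \<open>f (p j) = coef j * f u\<close>: the equation at \<open>p (j + 1)\<close> links
  \<open>f (p j)\<close> and \<open>f (p (j + 2))\<close>, so even positions are reached forward from \<open>p 0 = u\<close>
  and odd ones backward from \<open>p l = u\<close>.\<close>

definition "coef_even i = (-1) ^ i * cnj (\<Prod>j<2 * i. e j)"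

definition "coef_odd i = (-1) ^ (m - i) * (\<Prod>j\<in>{2 * i + 1..2 * m}. e j)"

definition "coef j = (if even j then coef_even (j div 2) else coef_odd (j div 2))"

lemma coef_even_Suc: "coef_even (Suc i) = - cnj (e (2 * i + 1)) * cnj (e (2 * i)) * coef_even i"
proof -
  have "(\<Prod>j<2 * Suc i. e j) = (\<Prod>j<2 * i. e j) * e (2 * i) * e (2 * i + 1)"
    by (simp add: mult.assoc)
  then show ?thesis unfolding coef_even_def by (simp add: algebra_simps)
qed

lemma coef_odd_Suc:
  assumes "i < m"
  shows "coef_odd i = - e (2 * i + 1) * e (2 * i + 2) * coef_odd (Suc i)"
proof -
  have "(\<Prod>j\<in>{2 * i + 1..2 * m}. e j) = e (2 * i + 1) * e (2 * i + 2) * (\<Prod>j\<in>{2 * Suc i + 1..2 * m}. e j)"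
    using assms by (simp add: prod.atLeast_Suc_atMost mult.assoc)
  moreover have "(-1::complex) ^ (m - i) = - ((-1) ^ (m - Suc i))"
    using assms by (simp add: Suc_diff_Suc[symmetric])
  ultimately show ?thesis unfolding coef_odd_def by (simp add: algebra_simps)
qed

lemma coef_even: "coef (2 * i) = coef_even i"
  and coef_odd: "coef (2 * i + 1) = coef_odd i"
  unfolding coef_def by simp_all

lemma coef_even_0: "coef_even 0 = 1"
  unfolding coef_even_def by simp

lemma coef_odd_m: "coef_odd m = 1"
  unfolding coef_odd_def by simp

lemma coef_0: "coef 0 = 1"
  using coef_even[of 0] coef_even_0 by simp

lemma coef_l: "coef l = 1"
  using coef_odd[of m] coef_odd_m l_eq by simp

lemma coef_path_eq:
  assumes "1 \<le> j" "j \<le> 2 * m"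
  shows "cnj (e (j - 1)) * coef (j - 1) + e j * coef (Suc j) = 0"
proof (cases "even j")
  case True
  define i where "i = j div 2 - 1"
  have i: "j = 2 * i + 2" unfolding i_def using True assms(1) by presburger
  then have "i < m" using assms by simp
  have "coef (j - 1) = coef_odd i" "coef (Suc j) = coef_odd (Suc i)"
    using i coef_odd[of i] coef_odd[of "Suc i"] by simp_all
  then have "cnj (e (j - 1)) * coef (j - 1) + e j * coef (Suc j)
      = e (2 * i + 2) * coef_odd (Suc i) * (1 - e (2 * i + 1) * cnj (e (2 * i + 1)))"
    unfolding coef_odd_Suc[OF \<open>i < m\<close>] i by (simp add: algebra_simps)
  then show ?thesis using unimodular_mult_cnj[OF e_unimodular] by simp
next
  case False
  then obtain i where i: "j = 2 * i + 1" by (rule oddE)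
  have "coef (j - 1) = coef_even i" "coef (Suc j) = coef_even (Suc i)"
    using i coef_even[of i] coef_even[of "Suc i"] by simp_all
  then have "cnj (e (j - 1)) * coef (j - 1) + e j * coef (Suc j)
      = cnj (e (2 * i)) * coef_even i * (1 - e (2 * i + 1) * cnj (e (2 * i + 1)))"
    unfolding coef_even_Suc i by (simp add: algebra_simps)
  then show ?thesis using unimodular_mult_cnj[OF e_unimodular] by simp
qed

lemma kernel_path_eq:
  assumes "f \<in> gain_kernel V E phi" "1 \<le> j" "j \<le> 2 * m"
  shows "cnj (e (j - 1)) * f (p (j - 1)) + e j * f (p (Suc j)) = 0"
  using assms p_in_V[of j] nbr_sum_path[of j f] l_eq unfolding gain_kernel_def by simp

lemma kernel_on_even:
  assumes f: "f \<in> gain_kernel V E phi" and "i \<le> m"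
  shows "f (p (2 * i)) = coef_even i * f u"
  using \<open>i \<le> m\<close>
proof (induction i)
  case 0
  then show ?case using p_0 coef_even_0 by simp
next
  case (Suc i)
  have "cnj (e (2 * i)) * f (p (2 * i)) + e (2 * i + 1) * f (p (2 * Suc i)) = 0"
    using kernel_path_eq[OF f, of "2 * i + 1"] Suc.prems by simp
  then have "f (p (2 * Suc i)) = - cnj (e (2 * i + 1)) * cnj (e (2 * i)) * f (p (2 * i))"
    by (rule unimodular_solve_snd[OF e_unimodular])
  then show ?case using Suc by (simp add: coef_even_Suc)
qed

lemma kernel_on_odd:
  assumes f: "f \<in> gain_kernel V E phi" and "d \<le> m"
  shows "f (p (2 * (m - d) + 1)) = coef_odd (m - d) * f u"
  using \<open>d \<le> m\<close>
proof (induction d)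
  case 0
  then show ?case using p_l l_eq coef_odd_m by simp
next
  case (Suc d)
  define i where "i = m - Suc d"
  have i: "i < m" "m - d = Suc i" using Suc.prems unfolding i_def by auto
  have "cnj (e (2 * i + 1)) * f (p (2 * i + 1)) + e (2 * i + 2) * f (p (2 * (m - d) + 1)) = 0"
    using kernel_path_eq[OF f, of "2 * i + 2"] i by simp
  then have "f (p (2 * i + 1)) = - e (2 * i + 1) * e (2 * i + 2) * f (p (2 * (m - d) + 1))"
    by (rule unimodular_solve_fst[OF e_unimodular])
  then show ?case using Suc i unfolding i_def[symmetric] by (simp add: coef_odd_Suc)
qed

lemma kernel_on_cycle:
  assumes f: "f \<in> gain_kernel V E phi" and j: "j \<le> l"
  shows "f (p j) = coef j * f u"
proof (cases "even j")
  case True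
  then obtain i where "j = 2 * i" by (rule evenE)
  then show ?thesis using kernel_on_even[OF f, of i] coef_even[of i] j l_eq by simp
next
  case False
  then obtain i where i: "j = 2 * i + 1" by (rule oddE)
  then have "i \<le> m" using j l_eq by simp
  then show ?thesis using kernel_on_odd[OF f, of "m - i"] coef_odd[of i] i by simp
qed

lemma coef_cancel_at_u: "e 0 * coef 1 + cnj (e (2 * m)) * coef (2 * m) = 0"
proof -
  define P where "P = (\<Prod>j<l. e j)"
  have "e 0 * (\<Prod>j\<in>{1..2 * m}. e j) = (\<Prod>j\<in>{0..2 * m}. e j)"
    by (simp add: prod.atLeast_Suc_atMost)
  also have "{0..2 * m} = {..<l}" using l_eq by auto
  finally have fst: "e 0 * coef 1 = (-1) ^ m * P"
    using coef_odd[of 0] unfolding coef_odd_def P_def by (simp add: algebra_simps)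
  have "cnj (e (2 * m)) * cnj (\<Prod>j<2 * m. e j) = cnj (\<Prod>j<Suc (2 * m). e j)"
    by (simp add: mult.commute)
  then have snd: "cnj (e (2 * m)) * coef (2 * m) = cnj ((-1) ^ m * P)"
    using l_eq unfolding coef_even coef_even_def P_def by (simp add: algebra_simps)
  have "Re ((-1) ^ m * P) = 0"
    using re_gain unfolding cycle_gain_eq_prod_e P_def m_def .
  then have "(-1) ^ m * P + cnj ((-1) ^ m * P) = 0"
    unfolding complex_add_cnj by simp
  then show ?thesis using fst snd by simp
qed

lemma kernel_restrict:
  assumes f: "f \<in> gain_kernel V E phi"
  shows "f \<in> gain_kernel V' E phi"
  unfolding gain_kernel_def mem_Collect_eq
proof
  fix a assume a: "a \<in> V'"
  show "nbr_sum V' E phi f a = 0"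
  proof (cases "a = u")
    case True
    have "f (p 1) = coef 1 * f u" "f (p (2 * m)) = coef (2 * m) * f u"
      using kernel_on_cycle[OF f] l_eq by simp_all
    then have "nbr_sum V E phi f u
        = nbr_sum V' E phi f u + (e 0 * coef 1 + cnj (e (2 * m)) * coef (2 * m)) * f u"
      using nbr_sum_u[of f] by (simp add: algebra_simps)
    then have "nbr_sum V E phi f u = nbr_sum V' E phi f u" using coef_cancel_at_u by simp
    then show ?thesis using f u_in_V True unfolding gain_kernel_def by simp
  next
    case False
    then have "a \<in> V - set c" using a unfolding V'_def by auto
    then show ?thesis using nbr_sum_outside[of a f] f unfolding gain_kernel_def by auto
  qed
qed

lemma kernel_determined_on_V':
  assumes "f \<in> gain_kernel V E phi" "g \<in> gain_kernel V E phi"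
    and "\<forall>b\<in>V'. f b = g b" and "b \<in> V"
  shows "f b = g b"
proof (cases "b \<in> set c")
  case True
  then obtain j where "j < l" "b = p j" using set_c by auto
  moreover have "f u = g u" using assms(3) unfolding V'_def by simp
  ultimately show ?thesis
    using kernel_on_cycle[OF assms(1), of j] kernel_on_cycle[OF assms(2), of j] by simp
next
  case False
  then show ?thesis using assms(3,4) unfolding V'_def by auto
qed

definition "extend_along_cycle g b = (if b \<in> set c then coef (find_first b c) * g u else g b)"

lemma extend_along_cycle_p:
  assumes "j \<le> l"
  shows "extend_along_cycle g (p j) = coef j * g u"
proof (cases "j = l")
  case True
  have "distinct c" using cycle unfolding is_cycle_def by simp
  then have "find_first u c = 0" using find_first_unique[of c 0] starts_at_u l_pos by simp
  then show ?thesis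
    using True p_0 p_l coef_0 coef_l p_mem[of 0] unfolding extend_along_cycle_def by simp
next
  case False
  then show ?thesis using assms p_mem cycle
    unfolding extend_along_cycle_def p_def is_cycle_def by (simp add: find_first_unique)
qed

lemma extend_along_cycle_on_V': "b \<in> V' \<Longrightarrow> extend_along_cycle g b = g b"
  using extend_along_cycle_p[of 0 g] p_0 coef_0 unfolding V'_def extend_along_cycle_def by auto

lemma kernel_extend:
  assumes g: "g \<in> gain_kernel V' E phi"
  shows "\<exists>f \<in> gain_kernel V E phi. \<forall>b\<in>V'. f b = g b"
proof -
  let ?f = "extend_along_cycle g"
  have "nbr_sum V E phi ?f a = 0" if a: "a \<in> V" for a
  proof (cases "a \<in> set c")
    case False
    then have "nbr_sum V E phi ?f a = nbr_sum V' E phi ?f a" using nbr_sum_outside a by simp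
    also have "\<dots> = nbr_sum V' E phi g a" by (intro nbr_sum_cong extend_along_cycle_on_V')
    finally show ?thesis using g a False unfolding gain_kernel_def V'_def by auto
  next
    case True
    then obtain j where j: "j < l" "a = p j" using set_c by auto
    show ?thesis
    proof (cases "j = 0")
      case True
      have "nbr_sum V' E phi ?f u = nbr_sum V' E phi g u" by (intro nbr_sum_cong extend_along_cycle_on_V')
      also have "\<dots> = 0" using g unfolding gain_kernel_def V'_def by auto
      finally have "nbr_sum V E phi ?f u = (e 0 * coef 1 + cnj (e (2 * m)) * coef (2 * m)) * g u"
        using nbr_sum_u[of ?f] extend_along_cycle_p[of 1 g] extend_along_cycle_p[of "2 * m" g] l_eq
        by (simp add: algebra_simps)
      then show ?thesis using coef_cancel_at_u j True p_0 by simp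
    next
      case False
      then have "1 \<le> j" "j \<le> 2 * m" using j l_eq by auto
      then have "nbr_sum V E phi ?f (p j) = (cnj (e (j - 1)) * coef (j - 1) + e j * coef (Suc j)) * g u"
        using nbr_sum_path[of j ?f] extend_along_cycle_p[of "j - 1" g] extend_along_cycle_p[of "Suc j" g] j l_eq
        by (simp add: algebra_simps)
      then show ?thesis using coef_path_eq \<open>1 \<le> j\<close> \<open>j \<le> 2 * m\<close> j by simp
    qed
  qed
  then show ?thesis using extend_along_cycle_on_V' unfolding gain_kernel_def by blast
qed

theorem gain_rank_remove_pendant_cycle: "gain_rank V E phi = gain_rank V' E phi + l - 1"
proof -
  have "gain_rank V E phi + card V' = gain_rank V' E phi + card V"
    using kernel_restrict kernel_determined_on_V' kernel_extend
    by (intro gain_rank_eq_by_kernel_restriction[OF finite_V V'_subset]) blast+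
  moreover have "card V' + l = card V + 1"
  proof -
    have "card (set c) = l" using cycle unfolding is_cycle_def by (simp add: distinct_card)
    moreover have "set c \<subseteq> V" using cycle unfolding is_cycle_def by simp
    ultimately show ?thesis
      unfolding V'_def using finite_V p_mem[of 0] p_0 card_mono[OF finite_V \<open>set c \<subseteq> V\<close>]
      by (simp add: card_Diff_subset)
  qed
  ultimately show ?thesis by linarith
qed

end

theorem lemma4p2:
  fixes V :: "'a::linorder set" and E :: "'a \<Rightarrow> 'a \<Rightarrow> bool"
    and phi :: "'a \<Rightarrow> 'a \<Rightarrow> complex" and c :: "'a list" and u :: 'a
  assumes "gain_graph V E phi"
    and "is_cycle V E c"
    and "u \<in> set c"
    and "degree V E u = 3"
    and "\<forall>x \<in> set c. x \<noteq> u \<longrightarrow> degree V E x = 2"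
    and "odd (length c)"
    and "Re ((-1) ^ ((length c - 1) div 2) * cycle_gain phi c) = 0"
  shows "gain_rank V E phi = gain_rank ((V - set c) \<union> {u}) E phi + length c - 1"
proof -
  obtain k where k: "k < length c" "c ! k = u" using assms(3) by (auto simp: in_set_conv_nth)
  have "c \<noteq> []" using k by auto
  interpret pendant_odd_cycle V E phi "rotate k c" u
  proof
    show "rotate k c ! 0 = u" using k nth_rotate[of 0 c k] \<open>c \<noteq> []\<close> by simp
  qed (use assms \<open>c \<noteq> []\<close> in \<open>simp_all add: is_cycle_rotate cycle_gain_rotate\<close>)
  show ?thesis using gain_rank_remove_pendant_cycle unfolding V'_def by simp
qed

end
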